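(* Let $F:\mathbf{Perf}(A)\to\mathbf{Perf}(A)$ be a fully faithful $k$-linear functor satisfying: $F\circ[1]=[1]\circ F$; $F(X_i[\alpha])=X_i[\alpha]$ for all $i\ge1,\alpha\in\mathbb{Z}$; (C1) $k^i_{i[0]}=1$ for all $i\ge1$; and (C2) $k^{i-1}_{i[0]}=1$ for all $i\ge2$. Put $\lambda=k^2_{1[1]}$. Then for all $i,j\ge1$ and $\alpha\in\mathbb{Z}$ with $-j<\alpha\le\min\{0,i-j\}$ or $\max\{0,i-j\}\le\alpha<i$, one has $k^i_{j[\alpha]}=\lambda^\alpha$. In particular the action of $F$ on morphisms between indecomposable objects is completely determined by $\lambda$.
   Context: $k$ is a field, $A=k[\epsilon]/(\epsilon^2)$, $\mathbf{Perf}(A)$ the homotopy category of bounded complexes of finitely generated free $A$-modules. For $i\ge1$, $X_i$ is the complex with $A$ in degrees $-i,\dots,-1$ and differentials multiplication by $\epsilon$; $X_j[\alpha]$ is modelled as the complex with $A$ in degrees $-j-\alpha,\dots,-1-\alpha$ and differentials $\epsilon$. For $\max\{0,i-j\}\le\alpha<i$ let $1^i_{j[\alpha]}$ be the class of the chain map $X_i\to X_j[\alpha]$ that is the identity in degrees where both are nonzero and $0$ elsewhere; for $-j<\alpha\le\min\{0,i-j\}$ let $\epsilon^i_{j[\alpha]}$ be the class of the chain map that is multiplication by $\epsilon$ in degree $-1$ and $0$ elsewhere. $\mathrm{Hom}(X_i,X_j[\alpha])$ is spanned by the generator when exactly one of these exists; for $i=j$, $\alpha=0$ it has basis $\mathrm{id},\epsilon^i_{i[0]}$.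 The coefficients $k^i_{j[\alpha]}\in k$ of $F$ are defined by: $F(g)=k^i_{j[\alpha]}g$ for $g$ the generator $1^i_{j[\alpha]}$ or $\epsilon^i_{j[\alpha]}$ when $(i-j,\alpha)\ne(0,0)$, and $F(a\,\mathrm{id}+b\,\epsilon^i_{i[0]})=a\,\mathrm{id}+k^i_{i[0]}b\,\epsilon^i_{i[0]}$. *)

theory Defs
  imports Main
begin

text \<open>An element a + b eps of A is represented by the pair (a, b).\<close>

definition dadd :: "'k::field \<times> 'k \<Rightarrow> 'k \<times> 'k \<Rightarrow> 'k \<times> 'k" where
  "dadd x y = (fst x + fst y, snd x + snd y)"

definition dscale :: "'k::field \<Rightarrow> 'k \<times> 'k \<Rightarrow> 'k \<times> 'k" where
  "dscale c x = (c * fst x, c * snd x)"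

definition dsub :: "'k::field \<times> 'k \<Rightarrow> 'k \<times> 'k \<Rightarrow> 'k \<times> 'k" where
  "dsub x y = (fst x - fst y, snd x - snd y)"

text \<open>Matrices over A: entry (r, c); the size is carried by the context.\<close>
type_synonym 'k amat = "nat \<Rightarrow> nat \<Rightarrow> 'k \<times> 'k"

text \<open>Product of matrices with inner dimension p, using (a+b eps)(c+d eps) = ac + (ad+bc) eps.\<close>
definition mmul :: "nat \<Rightarrow> 'k::field amat \<Rightarrow> 'k amat \<Rightarrow> 'k amat" where
  "mmul p M N = (\<lambda>r c. ((\<Sum>s<p. fst (M r s) * fst (N s c)),
                        (\<Sum>s<p. fst (M r s) * snd (N s c) + snd (M r s) * fst (N s c))))"

text \<open>rk n is the rank of the free module in degree n; dif n is the matrix of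
  d^n : C^n \<rightarrow> C^(n+1) (size rk (n+1) x rk n), entries outside the size being 0.\<close>
record 'k cplx =
  rk :: "int \<Rightarrow> nat"
  dif :: "int \<Rightarrow> 'k amat"

definition is_perf :: "'k::field cplx \<Rightarrow> bool" where
  "is_perf C \<longleftrightarrow>
     finite {n. rk C n \<noteq> 0} \<and>
     (\<forall>n r c. (rk C (n+1) \<le> r \<or> rk C n \<le> c) \<longrightarrow> dif C n r c = (0, 0)) \<and>
     (\<forall>n r c. mmul (rk C (n+1)) (dif C (n+1)) (dif C n) r c = (0, 0))"

type_synonym 'k cmap = "int \<Rightarrow> 'k amat"

definition is_chain :: "'k::field cplx \<Rightarrow> 'k cplx \<Rightarrow> 'k cmap \<Rightarrow> bool" where
  "is_chain X Y f \<longleftrightarrow>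
     (\<forall>n r c. (rk Y n \<le> r \<or> rk X n \<le> c) \<longrightarrow> f n r c = (0, 0)) \<and>
     (\<forall>n. mmul (rk Y n) (dif Y n) (f n) = mmul (rk X (n+1)) (f (n+1)) (dif X n))"

text \<open>Chain homotopy: f - g = d h + h d, with h n : X^n \<rightarrow> Y^(n-1).\<close>
definition homotopic :: "'k::field cplx \<Rightarrow> 'k cplx \<Rightarrow> 'k cmap \<Rightarrow> 'k cmap \<Rightarrow> bool" where
  "homotopic X Y f g \<longleftrightarrow>
     (\<exists>h :: 'k cmap.
        (\<forall>n r c. (rk Y (n-1) \<le> r \<or> rk X n \<le> c) \<longrightarrow> h n r c = (0, 0)) \<and>
        (\<forall>n r c. dsub (f n r c) (g n r c) =
                 dadd (mmul (rk Y (n-1)) (dif Y (n-1)) (h n) r c)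
                      (mmul (rk X (n+1)) (h (n+1)) (dif X n) r c)))"

definition cadd :: "'k::field cmap \<Rightarrow> 'k cmap \<Rightarrow> 'k cmap" where
  "cadd f g = (\<lambda>n r c. dadd (f n r c) (g n r c))"

definition cscale :: "'k::field \<Rightarrow> 'k cmap \<Rightarrow> 'k cmap" where
  "cscale a f = (\<lambda>n r c. dscale a (f n r c))"

definition ccomp :: "'k::field cplx \<Rightarrow> 'k cmap \<Rightarrow> 'k cmap \<Rightarrow> 'k cmap" where
  "ccomp Y g f = (\<lambda>n. mmul (rk Y n) (g n) (f n))"

definition cid :: "'k::field cplx \<Rightarrow> 'k cmap" where
  "cid X = (\<lambda>n r c. if r = c \<and> r < rk X n then (1, 0) else (0, 0))"

text \<open>Shift [1]: (C[1])^n = C^(n+1), d_{C[1]}^n = d_C^(n+1).  (Sign-free model of the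
  shift, matching the paper's model of X_j[alpha] with differentials eps.)\<close>
definition shift :: "'k cplx \<Rightarrow> 'k cplx" where
  "shift C = \<lparr>rk = (\<lambda>n. rk C (n+1)), dif = (\<lambda>n. dif C (n+1))\<rparr>"

definition shiftm :: "'k cmap \<Rightarrow> 'k cmap" where
  "shiftm f = (\<lambda>n. f (n+1))"

text \<open>A functor of the homotopy category Perf(A) given by its action Fo on objects and
  Fm X Y on (representatives of) morphisms X \<rightarrow> Y, well defined on homotopy classes.\<close>
definition perf_functor ::
  "('k::field cplx \<Rightarrow> 'k cplx) \<Rightarrow> ('k cplx \<Rightarrow> 'k cplx \<Rightarrow> 'k cmap \<Rightarrow> 'k cmap) \<Rightarrow> bool" where
  "perf_functor Fo Fm \<longleftrightarrow>
     (\<forall>X. is_perf X \<longrightarrow> is_perf (Fo X)) \<and>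
     (\<forall>X Y f. is_perf X \<and> is_perf Y \<and> is_chain X Y f \<longrightarrow>
        is_chain (Fo X) (Fo Y) (Fm X Y f)) \<and>
     (\<forall>X Y f g. is_perf X \<and> is_perf Y \<and> is_chain X Y f \<and> is_chain X Y g \<and>
        homotopic X Y f g \<longrightarrow> homotopic (Fo X) (Fo Y) (Fm X Y f) (Fm X Y g)) \<and>
     (\<forall>X Y Z f g. is_perf X \<and> is_perf Y \<and> is_perf Z \<and> is_chain X Y f \<and> is_chain Y Z g \<longrightarrow>
        homotopic (Fo X) (Fo Z) (Fm X Z (ccomp Y g f)) (ccomp (Fo Y) (Fm Y Z g) (Fm X Y f))) \<and>
     (\<forall>X. is_perf X \<longrightarrow> homotopic (Fo X) (Fo X) (Fm X X (cid X)) (cid (Fo X)))"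

definition k_linear_functor ::
  "('k::field cplx \<Rightarrow> 'k cplx) \<Rightarrow> ('k cplx \<Rightarrow> 'k cplx \<Rightarrow> 'k cmap \<Rightarrow> 'k cmap) \<Rightarrow> bool" where
  "k_linear_functor Fo Fm \<longleftrightarrow> perf_functor Fo Fm \<and>
     (\<forall>X Y f g a. is_perf X \<and> is_perf Y \<and> is_chain X Y f \<and> is_chain X Y g \<longrightarrow>
        homotopic (Fo X) (Fo Y) (Fm X Y (cadd (cscale a f) g))
                                (cadd (cscale a (Fm X Y f)) (Fm X Y g)))"

definition fully_faithful ::
  "('k::field cplx \<Rightarrow> 'k cplx) \<Rightarrow> ('k cplx \<Rightarrow> 'k cplx \<Rightarrow> 'k cmap \<Rightarrow> 'k cmap) \<Rightarrow> bool" where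
  "fully_faithful Fo Fm \<longleftrightarrow>
     (\<forall>X Y. is_perf X \<and> is_perf Y \<longrightarrow>
        (\<forall>f g. is_chain X Y f \<and> is_chain X Y g \<and>
               homotopic (Fo X) (Fo Y) (Fm X Y f) (Fm X Y g) \<longrightarrow> homotopic X Y f g) \<and>
        (\<forall>g. is_chain (Fo X) (Fo Y) g \<longrightarrow>
               (\<exists>f. is_chain X Y f \<and> homotopic (Fo X) (Fo Y) (Fm X Y f) g)))"

text \<open>F \<circ> [1] = [1] \<circ> F, on objects (strictly) and on morphisms (in the homotopy category).\<close>
definition commutes_shift ::
  "('k::field cplx \<Rightarrow> 'k cplx) \<Rightarrow> ('k cplx \<Rightarrow> 'k cplx \<Rightarrow> 'k cmap \<Rightarrow> 'k cmap) \<Rightarrow> bool" where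
  "commutes_shift Fo Fm \<longleftrightarrow>
     (\<forall>X. is_perf X \<longrightarrow> Fo (shift X) = shift (Fo X)) \<and>
     (\<forall>X Y f. is_perf X \<and> is_perf Y \<and> is_chain X Y f \<longrightarrow>
        homotopic (Fo (shift X)) (Fo (shift Y)) (Fm (shift X) (shift Y) (shiftm f))
                  (shiftm (Fm X Y f)))"

text \<open>X_j[alpha]: A in degrees -j-alpha, ..., -1-alpha, differentials multiplication by eps.
  X_i is X_i[0].\<close>
definition Xsh :: "nat \<Rightarrow> int \<Rightarrow> 'k::field cplx" where
  "Xsh j \<alpha> = \<lparr>rk = (\<lambda>n. if - int j - \<alpha> \<le> n \<and> n \<le> -1 - \<alpha> then 1 else 0),
               dif = (\<lambda>n r c. if r = 0 \<and> c = 0 \<and> - int j - \<alpha> \<le> n \<and> n + 1 \<le> -1 - \<alpha>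
                              then (0, 1) else (0, 0))\<rparr>"

definition one_map :: "nat \<Rightarrow> nat \<Rightarrow> int \<Rightarrow> 'k::field cmap" where
  "one_map i j \<alpha> = (\<lambda>n r c. if r = 0 \<and> c = 0 \<and> - int i \<le> n \<and> n \<le> -1 \<and>
                               - int j - \<alpha> \<le> n \<and> n \<le> -1 - \<alpha> then (1, 0) else (0, 0))"

definition eps_map :: "nat \<Rightarrow> nat \<Rightarrow> int \<Rightarrow> 'k::field cmap" where
  "eps_map i j \<alpha> = (\<lambda>n r c. if r = 0 \<and> c = 0 \<and> n = -1 then (0, 1) else (0, 0))"

text \<open>The generator of Hom(X_i, X_j[alpha]) whose F-coefficient is k^i_{j[alpha]}:
  eps^i_{j[alpha]} when -j < alpha <= min 0 (i-j) (this includes the case i = j, alpha = 0),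
  and 1^i_{j[alpha]} otherwise.\<close>
definition gen :: "nat \<Rightarrow> nat \<Rightarrow> int \<Rightarrow> 'k::field cmap" where
  "gen i j \<alpha> = (if - int j < \<alpha> \<and> \<alpha> \<le> min 0 (int i - int j) then eps_map i j \<alpha>
                 else one_map i j \<alpha>)"

definition kcoef ::
  "('k::field cplx \<Rightarrow> 'k cplx \<Rightarrow> 'k cmap \<Rightarrow> 'k cmap) \<Rightarrow> nat \<Rightarrow> nat \<Rightarrow> int \<Rightarrow> 'k" where
  "kcoef Fm i j \<alpha> = (THE c. homotopic (Xsh i 0) (Xsh j \<alpha>)
                         (Fm (Xsh i 0) (Xsh j \<alpha>) (gen i j \<alpha>)) (cscale c (gen i j \<alpha>)))"

end

theory Submission
  imports Defs
begin

text \<open>Every Hom space Hom(X_i, X_j[\<alpha>]) in the range of the theorem is one-dimensional up to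
  homotopy, spanned by the generator g: a chain map is a scalar multiple of g plus a null-homotopic
  map, the homotopy being found by telescoping along the degrees. Since F is k-linear and faithful,
  a composite g \<circ> f homotopic to a nonzero multiple of a generator u forces the coefficient of u
  to be the product of those of f and g. Composing the generators X_(i+1) \<rightarrow> X_i[1] with shifted
  generators gives k^(i+1)_(j[\<beta>+1]) = \<lambda> k^i_(j[\<beta>]) in both ranges, where
  \<lambda> = k^(i+1)_(i[1]) is independent of i and nonzero, and (C1), (C2) fix all coefficients
  with \<alpha> = 0 to be 1; induction on \<alpha> then gives \<lambda>^\<alpha>.\<close>

section \<open>Chain maps and homotopies between the complexes X_j[\<alpha>]\<close>

definition supp_Xsh :: "nat \<Rightarrow> int \<Rightarrow> int \<Rightarrow> bool" where
  "supp_Xsh j a n \<longleftrightarrow> - int j - a \<le> n \<and> n \<le> -1 - a"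

definition amul :: "'k::field \<times> 'k \<Rightarrow> 'k \<times> 'k \<Rightarrow> 'k \<times> 'k" where
  "amul x y = (fst x * fst y, fst x * snd y + snd x * fst y)"

lemma mmul_rank_le1:
  "p \<le> 1 \<Longrightarrow> mmul p M N r c = (if p = 0 then (0, 0) else amul (M r 0) (N 0 c))"
  by (cases p) (auto simp: mmul_def amul_def)

lemma rk_Xsh: "rk (Xsh j a) n = (if supp_Xsh j a n then 1 else 0)"
  by (simp add: Xsh_def supp_Xsh_def)

lemma dif_Xsh:
  "dif (Xsh j a) n r c =
     (if r = 0 \<and> c = 0 \<and> supp_Xsh j a n \<and> supp_Xsh j a (n+1) then (0, 1) else (0, 0))"
  by (auto simp: Xsh_def supp_Xsh_def)

lemma supp_Xsh_shift: "supp_Xsh j (a+1) n = supp_Xsh j a (n+1)"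
  by (auto simp: supp_Xsh_def)

lemma shift_Xsh: "shift (Xsh j a) = Xsh j (a+1)"
  by (simp add: shift_def Xsh_def fun_eq_iff algebra_simps)

lemma is_perf_Xsh: "is_perf (Xsh j a)"
proof -
  have "{n. rk (Xsh j a) n \<noteq> 0} \<subseteq> {- int j - a .. -1 - a}"
    by (auto simp: rk_Xsh supp_Xsh_def split: if_splits)
  then show ?thesis
    unfolding is_perf_def
    by (auto simp: finite_subset rk_Xsh dif_Xsh mmul_rank_le1 amul_def)
qed

text \<open>Since the differentials are multiplication by eps, the chain condition only constrains
  constant terms.\<close>
definition chain_Xsh :: "nat \<Rightarrow> int \<Rightarrow> nat \<Rightarrow> int \<Rightarrow> 'k::field cmap \<Rightarrow> bool" where
  "chain_Xsh i a j b f \<longleftrightarrow>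
     (\<forall>n r c. \<not> (r = 0 \<and> c = 0 \<and> supp_Xsh j b n \<and> supp_Xsh i a n) \<longrightarrow> f n r c = (0, 0)) \<and>
     (\<forall>n. (if supp_Xsh j b n \<and> supp_Xsh j b (n+1) then fst (f n 0 0) else 0) =
          (if supp_Xsh i a n \<and> supp_Xsh i a (n+1) then fst (f (n+1) 0 0) else 0))"

lemma chain_Xsh_vanish:
  "chain_Xsh i a j b f \<Longrightarrow> \<not> (r = 0 \<and> c = 0 \<and> supp_Xsh j b n \<and> supp_Xsh i a n) \<Longrightarrow>
   f n r c = (0, 0)"
  unfolding chain_Xsh_def by blast

lemma chain_Xsh_commute:
  "chain_Xsh i a j b f \<Longrightarrow>
   (if supp_Xsh j b n \<and> supp_Xsh j b (n+1) then fst (f n 0 0) else 0) =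
   (if supp_Xsh i a n \<and> supp_Xsh i a (n+1) then fst (f (n+1) 0 0) else 0)"
  unfolding chain_Xsh_def by blast

lemma is_chain_Xsh_iff:
  fixes f :: "'k::field cmap"
  shows "is_chain (Xsh i a :: 'k cplx) (Xsh j b) f \<longleftrightarrow> chain_Xsh i a j b f"
proof
  assume H: "is_chain (Xsh i a :: 'k cplx) (Xsh j b) f"
  have "(if supp_Xsh j b n \<and> supp_Xsh j b (n+1) then fst (f n 0 0) else 0) =
        (if supp_Xsh i a n \<and> supp_Xsh i a (n+1) then fst (f (n+1) 0 0) else 0)" for n
  proof -
    have "mmul (rk (Xsh j b :: 'k cplx) n) (dif (Xsh j b) n) (f n) 0 0 =
          mmul (rk (Xsh i a :: 'k cplx) (n+1)) (f (n+1)) (dif (Xsh i a) n) 0 0"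
      using H unfolding is_chain_def by metis
    then show ?thesis by (auto simp: mmul_rank_le1 rk_Xsh dif_Xsh amul_def split: if_splits)
  qed
  with H show "chain_Xsh i a j b f"
    unfolding is_chain_def chain_Xsh_def by (auto simp: rk_Xsh)
next
  assume f: "chain_Xsh i a j b f"
  show "is_chain (Xsh i a :: 'k cplx) (Xsh j b) f"
    unfolding is_chain_def
  proof (intro conjI allI impI ext)
    fix n r c assume "rk (Xsh j b :: 'k cplx) n \<le> r \<or> rk (Xsh i a :: 'k cplx) n \<le> c"
    then show "f n r c = (0, 0)"
      by (intro chain_Xsh_vanish[OF f]) (auto simp: rk_Xsh split: if_splits)
  next
    fix n r c
    show "mmul (rk (Xsh j b :: 'k cplx) n) (dif (Xsh j b) n) (f n) r c =
          mmul (rk (Xsh i a :: 'k cplx) (n+1)) (f (n+1)) (dif (Xsh i a) n) r c"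
      using chain_Xsh_commute[OF f, of n] chain_Xsh_vanish[OF f, of 0 c n]
        chain_Xsh_vanish[OF f, of r 0 "n+1"]
      by (auto simp: mmul_rank_le1 rk_Xsh dif_Xsh amul_def split: if_splits)
  qed
qed

text \<open>A homotopy between maps X_i[a] \<rightarrow> X_j[b] has at most one entry X_i[a]^n \<rightarrow> X_j[b]^(n-1)
  in each degree n, and only its constant term x n enters d h + h d, because eps^2 = 0.\<close>
definition htpy_Xsh ::
  "nat \<Rightarrow> int \<Rightarrow> nat \<Rightarrow> int \<Rightarrow> 'k::field cmap \<Rightarrow> 'k cmap \<Rightarrow> (int \<Rightarrow> 'k) \<Rightarrow> bool" where
  "htpy_Xsh i a j b f g x \<longleftrightarrow>
     (\<forall>n. \<not> (supp_Xsh j b (n-1) \<and> supp_Xsh i a n) \<longrightarrow> x n = 0) \<and>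
     (\<forall>n r c. dsub (f n r c) (g n r c) =
        (if r = 0 \<and> c = 0 then
           (0, (if supp_Xsh j b (n-1) \<and> supp_Xsh j b n then x n else 0) +
               (if supp_Xsh i a n \<and> supp_Xsh i a (n+1) then x (n+1) else 0))
         else (0, 0)))"

lemma htpy_Xsh_vanish:
  "htpy_Xsh i a j b f g x \<Longrightarrow> \<not> (supp_Xsh j b (n-1) \<and> supp_Xsh i a n) \<Longrightarrow> x n = 0"
  unfolding htpy_Xsh_def by blast

lemma htpy_Xsh_diff:
  "htpy_Xsh i a j b f g x \<Longrightarrow>
   dsub (f n 0 0) (g n 0 0) =
     (0, (if supp_Xsh j b (n-1) \<and> supp_Xsh j b n then x n else 0) +
         (if supp_Xsh i a n \<and> supp_Xsh i a (n+1) then x (n+1) else 0))"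
  unfolding htpy_Xsh_def by simp

lemma htpy_XshI:
  assumes f: "chain_Xsh i a j b f" and g: "chain_Xsh i a j b g"
    and x: "\<And>n. \<not> (supp_Xsh j b (n-1) \<and> supp_Xsh i a n) \<Longrightarrow> x n = 0"
    and d: "\<And>n. dsub (f n 0 0) (g n 0 0) =
      (0, (if supp_Xsh j b (n-1) \<and> supp_Xsh j b n then x n else 0) +
          (if supp_Xsh i a n \<and> supp_Xsh i a (n+1) then x (n+1) else 0))"
  shows "htpy_Xsh i a j b f g x"
  unfolding htpy_Xsh_def
  using x d chain_Xsh_vanish[OF f] chain_Xsh_vanish[OF g] by (auto simp: dsub_def)

lemma homotopic_Xsh_iff:
  fixes f g :: "'k::field cmap"
  shows "homotopic (Xsh i a :: 'k cplx) (Xsh j b) f g \<longleftrightarrow> (\<exists>x. htpy_Xsh i a j b f g x)"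
proof
  assume "homotopic (Xsh i a :: 'k cplx) (Xsh j b) f g"
  then obtain h :: "'k cmap" where
    hv: "\<And>n r c. rk (Xsh j b :: 'k cplx) (n-1) \<le> r \<or> rk (Xsh i a :: 'k cplx) n \<le> c \<Longrightarrow>
           h n r c = (0, 0)" and
    he: "\<And>n r c. dsub (f n r c) (g n r c) =
           dadd (mmul (rk (Xsh j b :: 'k cplx) (n-1)) (dif (Xsh j b) (n-1)) (h n) r c)
                (mmul (rk (Xsh i a :: 'k cplx) (n+1)) (h (n+1)) (dif (Xsh i a) n) r c)"
    unfolding homotopic_def by blast
  have "htpy_Xsh i a j b f g (\<lambda>n. fst (h n 0 0))"
    unfolding htpy_Xsh_def he
    using hv[of _ 0 0] hv[of _ 0 _] hv[of _ _ 0]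
    by (auto simp: mmul_rank_le1 rk_Xsh dif_Xsh amul_def dadd_def)
  then show "\<exists>x. htpy_Xsh i a j b f g x" by blast
next
  assume "\<exists>x. htpy_Xsh i a j b f g x"
  then obtain x where x: "htpy_Xsh i a j b f g x" ..
  define h :: "'k cmap" where
    "h n r c = (if r = 0 \<and> c = 0 \<and> supp_Xsh j b (n-1) \<and> supp_Xsh i a n then (x n, 0) else (0, 0))"
    for n r c
  show "homotopic (Xsh i a :: 'k cplx) (Xsh j b) f g"
    unfolding homotopic_def
  proof (intro exI[of _ h] conjI allI impI)
    fix n r c assume "rk (Xsh j b :: 'k cplx) (n-1) \<le> r \<or> rk (Xsh i a :: 'k cplx) n \<le> c"
    then show "h n r c = (0, 0)" by (auto simp: h_def rk_Xsh split: if_splits)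
  next
    fix n r c
    show "dsub (f n r c) (g n r c) =
          dadd (mmul (rk (Xsh j b :: 'k cplx) (n-1)) (dif (Xsh j b) (n-1)) (h n) r c)
               (mmul (rk (Xsh i a :: 'k cplx) (n+1)) (h (n+1)) (dif (Xsh i a) n) r c)"
      using x htpy_Xsh_vanish[OF x, of n] htpy_Xsh_vanish[OF x, of "n+1"]
      unfolding htpy_Xsh_def
      by (auto simp: mmul_rank_le1 rk_Xsh dif_Xsh amul_def dadd_def h_def)
  qed
qed

abbreviation htp :: "nat \<Rightarrow> int \<Rightarrow> nat \<Rightarrow> int \<Rightarrow> 'k::field cmap \<Rightarrow> 'k cmap \<Rightarrow> bool" where
  "htp i a j b f g \<equiv> homotopic (Xsh i a :: 'k cplx) (Xsh j b) f g"

lemma htp_refl: "htp i a j b f f"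
  unfolding homotopic_Xsh_iff htpy_Xsh_def by (intro exI[of _ "\<lambda>_. 0"]) (simp add: dsub_def)

lemma htpy_Xsh_sym: "htpy_Xsh i a j b f g x \<Longrightarrow> htpy_Xsh i a j b g f (\<lambda>n. - x n)"
proof -
  have "dsub (g n r c) (f n r c) =
        (- fst (dsub (f n r c) (g n r c)), - snd (dsub (f n r c) (g n r c)))"
    for n r c
    by (simp add: dsub_def)
  then show "htpy_Xsh i a j b f g x \<Longrightarrow> htpy_Xsh i a j b g f (\<lambda>n. - x n)"
    unfolding htpy_Xsh_def by auto
qed

lemma htpy_Xsh_trans:
  "htpy_Xsh i a j b f g x \<Longrightarrow> htpy_Xsh i a j b g h y \<Longrightarrow> htpy_Xsh i a j b f h (\<lambda>n. x n + y n)"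
proof -
  have "dsub (f n r c) (h n r c) =
        (fst (dsub (f n r c) (g n r c)) + fst (dsub (g n r c) (h n r c)),
         snd (dsub (f n r c) (g n r c)) + snd (dsub (g n r c) (h n r c)))" for n r c
    by (simp add: dsub_def)
  then show "htpy_Xsh i a j b f g x \<Longrightarrow> htpy_Xsh i a j b g h y \<Longrightarrow> ?thesis"
    unfolding htpy_Xsh_def by (auto simp: algebra_simps)
qed

lemma htpy_Xsh_cscale:
  "htpy_Xsh i a j b f g x \<Longrightarrow> htpy_Xsh i a j b (cscale k f) (cscale k g) (\<lambda>n. k * x n)"
proof -
  have "dsub (cscale k f n r c) (cscale k g n r c) =
        (k * fst (dsub (f n r c) (g n r c)), k * snd (dsub (f n r c) (g n r c)))" for n r c
    by (simp add: dsub_def cscale_def dscale_def algebra_simps)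
  then show "htpy_Xsh i a j b f g x \<Longrightarrow> ?thesis"
    unfolding htpy_Xsh_def by (auto simp: algebra_simps)
qed

lemma htp_sym: "htp i a j b f g \<Longrightarrow> htp i a j b g f"
  unfolding homotopic_Xsh_iff by (blast intro: htpy_Xsh_sym)

lemma htp_trans [trans]: "htp i a j b f g \<Longrightarrow> htp i a j b g h \<Longrightarrow> htp i a j b f h"
  unfolding homotopic_Xsh_iff by (blast intro: htpy_Xsh_trans)

lemma htp_cscale: "htp i a j b f g \<Longrightarrow> htp i a j b (cscale k f) (cscale k g)"
  unfolding homotopic_Xsh_iff by (blast intro: htpy_Xsh_cscale)

lemma htp_cadd_left: "htp i a j b f g \<Longrightarrow> htp i a j b (cadd k f) (cadd k g)"
  unfolding homotopic_Xsh_iff htpy_Xsh_def by (simp add: dsub_def cadd_def dadd_def)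

lemma htp_fst: "htp i a j b f g \<Longrightarrow> fst (f n r c) = fst (g n r c)"
proof -
  assume "htp i a j b f g"
  then obtain x where "htpy_Xsh i a j b f g x" unfolding homotopic_Xsh_iff ..
  then have "fst (dsub (f n r c) (g n r c)) = 0" unfolding htpy_Xsh_def by simp
  then show ?thesis by (simp add: dsub_def)
qed

definition czero :: "'k::field cmap" where
  "czero = (\<lambda>n r c. (0, 0))"

lemma cscale_cscale: "cscale a (cscale b f) = cscale (a * b) f"
  by (simp add: cscale_def dscale_def fun_eq_iff)

lemma cscale_one: "cscale 1 f = f"
  by (simp add: cscale_def dscale_def fun_eq_iff)

lemma cscale_zero: "cscale 0 f = czero"
  by (simp add: cscale_def dscale_def fun_eq_iff czero_def)

lemma cadd_czero: "cadd f czero = f"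
  by (simp add: cadd_def dadd_def fun_eq_iff czero_def)

lemma cadd_cscale_neg: "cadd (cscale (-1) f) f = czero"
  by (simp add: cadd_def dadd_def cscale_def dscale_def fun_eq_iff czero_def)

lemma chain_Xsh_czero: "chain_Xsh i a j b czero"
  by (simp add: chain_Xsh_def czero_def)

lemma chain_Xsh_cscale: "chain_Xsh i a j b f \<Longrightarrow> chain_Xsh i a j b (cscale k f)"
  unfolding chain_Xsh_def cscale_def dscale_def by (auto split: if_splits)

lemma ccomp_Xsh:
  assumes "chain_Xsh i a j b f" "chain_Xsh j b l e g"
  shows "ccomp (Xsh j b) g f n r c =
         (if r = 0 \<and> c = 0 \<and> supp_Xsh j b n then amul (g n 0 0) (f n 0 0) else (0, 0))"
  using chain_Xsh_vanish[OF assms(1), of 0 c n] chain_Xsh_vanish[OF assms(2), of r 0 n]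
  by (auto simp: ccomp_def mmul_rank_le1 rk_Xsh amul_def)

lemma chain_Xsh_ccomp:
  assumes f: "chain_Xsh i a j b f" and g: "chain_Xsh j b l e g"
  shows "chain_Xsh i a l e (ccomp (Xsh j b) g f)"
  unfolding chain_Xsh_def
proof (intro conjI allI impI)
  fix n :: int and r c :: nat
  assume "\<not> (r = 0 \<and> c = 0 \<and> supp_Xsh l e n \<and> supp_Xsh i a n)"
  then show "ccomp (Xsh j b) g f n r c = (0, 0)"
    using chain_Xsh_vanish[OF f, of 0 0 n] chain_Xsh_vanish[OF g, of 0 0 n]
    by (auto simp: ccomp_Xsh[OF f g] amul_def)
next
  fix n
  show "(if supp_Xsh l e n \<and> supp_Xsh l e (n+1) then fst (ccomp (Xsh j b) g f n 0 0) else 0) =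
        (if supp_Xsh i a n \<and> supp_Xsh i a (n+1) then fst (ccomp (Xsh j b) g f (n+1) 0 0) else 0)"
    using chain_Xsh_commute[OF f, of n] chain_Xsh_commute[OF g, of n]
      chain_Xsh_vanish[OF f, of 0 0 n] chain_Xsh_vanish[OF g, of 0 0 "n+1"]
    by (auto simp: ccomp_Xsh[OF f g] amul_def split: if_splits)
qed

lemma ccomp_cscale:
  assumes "chain_Xsh i a j b f" "chain_Xsh j b l e g"
  shows "ccomp (Xsh j b) (cscale q g) (cscale p f) = cscale (p * q) (ccomp (Xsh j b) g f)"
  unfolding fun_eq_iff ccomp_Xsh[OF assms]
    ccomp_Xsh[OF chain_Xsh_cscale[OF assms(1)] chain_Xsh_cscale[OF assms(2)]]
  by (auto simp: cscale_def dscale_def amul_def algebra_simps)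

lemma htpy_Xsh_ccomp_right:
  assumes f: "chain_Xsh i a j b f" and f': "chain_Xsh i a j b f'" and g: "chain_Xsh j b l e g"
    and x: "htpy_Xsh i a j b f f' x"
  shows "htpy_Xsh i a l e (ccomp (Xsh j b) g f) (ccomp (Xsh j b) g f')
           (\<lambda>n. fst (g (n-1) 0 0) * x n)"
proof (rule htpy_XshI[OF chain_Xsh_ccomp[OF f g] chain_Xsh_ccomp[OF f' g]])
  fix n
  show "\<not> (supp_Xsh l e (n-1) \<and> supp_Xsh i a n) \<Longrightarrow> fst (g (n-1) 0 0) * x n = 0"
    using chain_Xsh_vanish[OF g, of 0 0 "n-1"] htpy_Xsh_vanish[OF x, of n] by auto
  have "(if supp_Xsh l e (n-1) \<and> supp_Xsh l e n then fst (g (n-1) 0 0) * x n else 0) =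
        (if supp_Xsh l e (n-1) \<and> supp_Xsh l e n then fst (g (n-1) 0 0) else 0) * x n"
    by simp
  also have "\<dots> = (if supp_Xsh j b (n-1) \<and> supp_Xsh j b n then fst (g n 0 0) else 0) * x n"
    using chain_Xsh_commute[OF g, of "n-1"] by simp
  finally have gc: "(if supp_Xsh l e (n-1) \<and> supp_Xsh l e n then fst (g (n-1) 0 0) * x n else 0) =
      (if supp_Xsh j b (n-1) \<and> supp_Xsh j b n then x n else 0) * fst (g n 0 0)"
    by simp
  have "dsub (ccomp (Xsh j b) g f n 0 0) (ccomp (Xsh j b) g f' n 0 0) =
    (0, (if supp_Xsh j b (n-1) \<and> supp_Xsh j b n then x n else 0) * fst (g n 0 0) +
        (if supp_Xsh i a n \<and> supp_Xsh i a (n+1) then fst (g n 0 0) * x (n+1) else 0))"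
  proof (cases "supp_Xsh j b n")
    case True
    then show ?thesis
      using htpy_Xsh_diff[OF x, of n]
      by (simp add: ccomp_Xsh[OF f g] ccomp_Xsh[OF f' g] dsub_def amul_def prod_eq_iff
          algebra_simps)
  next
    case False
    then show ?thesis
      using htpy_Xsh_vanish[OF x, of "n+1"]
      by (simp add: ccomp_Xsh[OF f g] ccomp_Xsh[OF f' g] dsub_def)
  qed
  then show "dsub (ccomp (Xsh j b) g f n 0 0) (ccomp (Xsh j b) g f' n 0 0) =
    (0, (if supp_Xsh l e (n-1) \<and> supp_Xsh l e n then fst (g (n-1) 0 0) * x n else 0) +
        (if supp_Xsh i a n \<and> supp_Xsh i a (n+1) then fst (g (n+1-1) 0 0) * x (n+1) else 0))"
    by (simp only: gc add_diff_cancel_right')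
qed

lemma htpy_Xsh_ccomp_left:
  assumes f: "chain_Xsh i a j b f" and g: "chain_Xsh j b l e g" and g': "chain_Xsh j b l e g'"
    and y: "htpy_Xsh j b l e g g' y"
  shows "htpy_Xsh i a l e (ccomp (Xsh j b) g f) (ccomp (Xsh j b) g' f) (\<lambda>n. y n * fst (f n 0 0))"
proof (rule htpy_XshI[OF chain_Xsh_ccomp[OF f g] chain_Xsh_ccomp[OF f g']])
  fix n
  show "\<not> (supp_Xsh l e (n-1) \<and> supp_Xsh i a n) \<Longrightarrow> y n * fst (f n 0 0) = 0"
    using chain_Xsh_vanish[OF f, of 0 0 n] htpy_Xsh_vanish[OF y, of n] by auto
  have fc: "(if supp_Xsh i a n \<and> supp_Xsh i a (n+1) then y (n+1) * fst (f (n+1) 0 0) else 0) =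
      y (n+1) * (if supp_Xsh j b n \<and> supp_Xsh j b (n+1) then fst (f n 0 0) else 0)"
    using chain_Xsh_commute[OF f, of n] by simp
  have "dsub (ccomp (Xsh j b) g f n 0 0) (ccomp (Xsh j b) g' f n 0 0) =
    (0, (if supp_Xsh l e (n-1) \<and> supp_Xsh l e n then y n * fst (f n 0 0) else 0) +
        y (n+1) * (if supp_Xsh j b n \<and> supp_Xsh j b (n+1) then fst (f n 0 0) else 0))"
  proof (cases "supp_Xsh j b n")
    case True
    then show ?thesis
      using htpy_Xsh_diff[OF y, of n]
      by (simp add: ccomp_Xsh[OF f g] ccomp_Xsh[OF f g'] dsub_def amul_def prod_eq_iff
          algebra_simps)
  next
    case False
    then show ?thesis
      using chain_Xsh_vanish[OF f, of 0 0 n]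
      by (simp add: ccomp_Xsh[OF f g] ccomp_Xsh[OF f g'] dsub_def)
  qed
  then show "dsub (ccomp (Xsh j b) g f n 0 0) (ccomp (Xsh j b) g' f n 0 0) =
    (0, (if supp_Xsh l e (n-1) \<and> supp_Xsh l e n then y n * fst (f n 0 0) else 0) +
        (if supp_Xsh i a n \<and> supp_Xsh i a (n+1) then y (n+1) * fst (f (n+1) 0 0) else 0))"
    by (simp only: fc)
qed

lemma htp_ccomp_right:
  "chain_Xsh i a j b f \<Longrightarrow> chain_Xsh i a j b f' \<Longrightarrow> chain_Xsh j b l e g \<Longrightarrow> htp i a j b f f' \<Longrightarrow>
   htp i a l e (ccomp (Xsh j b) g f) (ccomp (Xsh j b) g f')"
  unfolding homotopic_Xsh_iff by (blast intro: htpy_Xsh_ccomp_right)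

lemma htp_ccomp_left:
  "chain_Xsh i a j b f \<Longrightarrow> chain_Xsh j b l e g \<Longrightarrow> chain_Xsh j b l e g' \<Longrightarrow> htp j b l e g g' \<Longrightarrow>
   htp i a l e (ccomp (Xsh j b) g f) (ccomp (Xsh j b) g' f)"
  unfolding homotopic_Xsh_iff by (blast intro: htpy_Xsh_ccomp_left)

lemma chain_Xsh_shiftm:
  assumes f: "chain_Xsh i a j b f"
  shows "chain_Xsh i (a+1) j (b+1) (shiftm f)"
  unfolding chain_Xsh_def shiftm_def supp_Xsh_shift
proof (intro conjI allI impI)
  fix n :: int and r c :: nat
  assume "\<not> (r = 0 \<and> c = 0 \<and> supp_Xsh j b (n+1) \<and> supp_Xsh i a (n+1))"
  then show "f (n+1) r c = (0, 0)" by (rule chain_Xsh_vanish[OF f])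
next
  fix n :: int
  show "(if supp_Xsh j b (n+1) \<and> supp_Xsh j b (n+1+1) then fst (f (n+1) 0 0) else 0) =
        (if supp_Xsh i a (n+1) \<and> supp_Xsh i a (n+1+1) then fst (f (n+1+1) 0 0) else 0)"
    by (rule chain_Xsh_commute[OF f])
qed

lemma htpy_Xsh_shiftm:
  assumes x: "htpy_Xsh i a j b f g x"
  shows "htpy_Xsh i (a+1) j (b+1) (shiftm f) (shiftm g) (\<lambda>n. x (n+1))"
  unfolding htpy_Xsh_def shiftm_def supp_Xsh_shift
proof (intro conjI allI impI)
  fix n :: int
  assume "\<not> (supp_Xsh j b (n-1+1) \<and> supp_Xsh i a (n+1))"
  then show "x (n+1) = 0" using htpy_Xsh_vanish[OF x, of "n+1"] by simp
next
  fix n :: int and r c :: nat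
  show "dsub (f (n+1) r c) (g (n+1) r c) =
    (if r = 0 \<and> c = 0
     then (0, (if supp_Xsh j b (n-1+1) \<and> supp_Xsh j b (n+1) then x (n+1) else 0) +
              (if supp_Xsh i a (n+1) \<and> supp_Xsh i a (n+1+1) then x (n+1+1) else 0))
     else (0, 0))"
    using x[unfolded htpy_Xsh_def, THEN conjunct2, rule_format, of "n+1" r c] by simp
qed

lemma htp_shiftm: "htp i a j b f g \<Longrightarrow> htp i (a+1) j (b+1) (shiftm f) (shiftm g)"
  unfolding homotopic_Xsh_iff by (blast intro: htpy_Xsh_shiftm)

lemma shiftm_cscale: "shiftm (cscale k f) = cscale k (shiftm f)"
  by (simp add: shiftm_def cscale_def)

section \<open>Hom spaces between the complexes X_j[\<alpha>]\<close>

definition idm :: "nat \<Rightarrow> int \<Rightarrow> nat \<Rightarrow> int \<Rightarrow> 'k::field cmap" where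
  "idm i a j b =
     (\<lambda>n r c. if r = 0 \<and> c = 0 \<and> supp_Xsh i a n \<and> supp_Xsh j b n then (1, 0) else (0, 0))"

definition epsm :: "'k::field cmap" where
  "epsm = (\<lambda>n r c. if r = 0 \<and> c = 0 \<and> n = -1 then (0, 1) else (0, 0))"

lemma one_map_eq_idm: "one_map i j \<alpha> = idm i 0 j \<alpha>"
  by (auto simp: one_map_def idm_def supp_Xsh_def fun_eq_iff)

lemma eps_map_eq_epsm: "eps_map i j \<alpha> = epsm"
  by (simp add: eps_map_def epsm_def)

lemma shiftm_idm: "shiftm (idm i a j b) = idm i (a+1) j (b+1)"
  by (simp add: shiftm_def idm_def supp_Xsh_shift fun_eq_iff)

lemma chain_Xsh_idm: "a \<le> b \<Longrightarrow> int i + a \<le> int j + b \<Longrightarrow> chain_Xsh i a j b (idm i a j b)"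
  unfolding chain_Xsh_def idm_def supp_Xsh_def by auto

lemma chain_Xsh_epsm: "supp_Xsh i a (-1) \<Longrightarrow> supp_Xsh j b (-1) \<Longrightarrow> chain_Xsh i a j b epsm"
  unfolding chain_Xsh_def epsm_def by auto

lemma ccomp_idm_idm:
  assumes "a \<le> b" "int i + a \<le> int j + b" "b \<le> e" "int j + b \<le> int l + e"
    and "\<And>n. supp_Xsh i a n \<Longrightarrow> supp_Xsh l e n \<Longrightarrow> supp_Xsh j b n"
  shows "ccomp (Xsh j b) (idm j b l e) (idm i a j b) = idm i a l e"
  unfolding fun_eq_iff ccomp_Xsh[OF chain_Xsh_idm[OF assms(1,2)] chain_Xsh_idm[OF assms(3,4)]]
  using assms(5) by (auto simp: idm_def amul_def)

lemma ccomp_epsm_idm: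
  assumes "supp_Xsh i a (-1)" "supp_Xsh j b (-1)" "supp_Xsh l e (-1)"
    and "a \<le> b" "int i + a \<le> int j + b"
  shows "ccomp (Xsh j b) epsm (idm i a j b) = epsm"
  unfolding fun_eq_iff ccomp_Xsh[OF chain_Xsh_idm[OF assms(4,5)] chain_Xsh_epsm[OF assms(2,3)]]
  using assms by (auto simp: idm_def epsm_def amul_def)

text \<open>The homotopy is the identity of A from degree -1 to degree -2.\<close>
lemma htp_ccomp_shiftm_epsm:
  assumes "j \<ge> 1" "l \<ge> 1" "int l + e \<ge> 2" "e \<le> 0"
  shows "htp (j+1) 0 l e (ccomp (Xsh j 1) (shiftm epsm) (idm (j+1) 0 j 1)) (cscale (-1) epsm)"
proof -
  have f: "chain_Xsh (j+1) 0 j 1 (idm (j+1) 0 j 1)" by (rule chain_Xsh_idm) auto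
  have "chain_Xsh j 0 l (e-1) epsm"
    by (rule chain_Xsh_epsm) (use assms in \<open>auto simp: supp_Xsh_def\<close>)
  from chain_Xsh_shiftm[OF this] have g: "chain_Xsh j 1 l e (shiftm epsm)" by simp
  have "htpy_Xsh (j+1) 0 l e (ccomp (Xsh j 1) (shiftm epsm) (idm (j+1) 0 j 1)) (cscale (-1) epsm)
          (\<lambda>n. if n = -1 then 1 else 0)"
    unfolding htpy_Xsh_def ccomp_Xsh[OF f g]
    using assms by (auto simp: supp_Xsh_def idm_def epsm_def shiftm_def amul_def dsub_def cscale_def
        dscale_def)
  then show ?thesis unfolding homotopic_Xsh_iff by blast
qed

lemma telescoping_up:
  fixes d :: "int \<Rightarrow> 'a::ab_group_add"
  shows "\<exists>x. (\<forall>n. n \<le> L \<or> U + 1 < n \<longrightarrow> x n = 0) \<and>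
             (\<forall>n. L \<le> n \<and> n \<le> U \<longrightarrow> d n = x n + x (n+1))"
proof -
  define t where "t = rec_nat 0 (\<lambda>k y. d (L + int k) - y)"
  define x where "x n = (if L < n \<and> n \<le> U + 1 then t (nat (n - L)) else 0)" for n
  have "d n = x n + x (n+1)" if "L \<le> n" "n \<le> U" for n
  proof -
    have "nat (n + 1 - L) = Suc (nat (n - L))" using that by simp
    then show ?thesis using that by (cases "n = L") (auto simp: x_def t_def)
  qed
  moreover have "x n = 0" if "n \<le> L \<or> U + 1 < n" for n
    using that by (auto simp: x_def)
  ultimately show ?thesis by blast
qed

lemma telescoping_down:
  fixes d :: "int \<Rightarrow> 'a::ab_group_add"
  shows "\<exists>x. (\<forall>n. n < L \<or> U < n \<longrightarrow> x n = 0) \<and>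
             (\<forall>n. L \<le> n \<and> n \<le> U \<longrightarrow> d n = x n + x (n+1))"
proof -
  obtain y where y0: "\<And>n. n \<le> L \<or> U + 1 < n \<Longrightarrow> y n = 0"
    and yd: "\<And>n. L \<le> n \<and> n \<le> U \<Longrightarrow> d (L + U - n) = y n + y (n+1)"
    using telescoping_up[where d="\<lambda>n. d (L + U - n)" and L=L and U=U] by blast
  have "d n = y (L + U + 1 - n) + y (L + U + 1 - (n+1))" if "L \<le> n" "n \<le> U" for n
    using yd[of "L + U - n"] that by (simp add: algebra_simps)
  then show ?thesis
    using y0 by (intro exI[of _ "\<lambda>n. y (L + U + 1 - n)"]) (auto simp: algebra_simps)
qed

lemma chain_Xsh_fst_const:
  assumes f: "chain_Xsh i a j b f"
    and supp: "\<And>m. L \<le> m \<Longrightarrow> m < U \<Longrightarrow>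
      supp_Xsh j b m \<and> supp_Xsh j b (m+1) \<and> supp_Xsh i a m \<and> supp_Xsh i a (m+1)"
    and "L \<le> n" "n \<le> U"
  shows "fst (f n 0 0) = fst (f U 0 0)"
  using \<open>n \<le> U\<close> \<open>L \<le> n\<close>
proof (induction n rule: int_le_induct)
  case base
  show ?case ..
next
  case (step m)
  then show ?case
    using chain_Xsh_commute[OF f, of "m-1"] supp[of "m-1"] by simp
qed

lemma htp_idm_multiple_pos:
  assumes "1 \<le> \<alpha>" "int i - int j \<le> \<alpha>" "\<alpha> < int i" and f: "chain_Xsh i 0 j \<alpha> f"
  shows "htp i 0 j \<alpha> f (cscale (fst (f (-1-\<alpha>) 0 0)) (idm i 0 j \<alpha>))"
proof -
  let ?a = "fst (f (-1-\<alpha>) 0 0)"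
  have const: "fst (f n 0 0) = ?a" if "- int i \<le> n" "n \<le> -1-\<alpha>" for n
    by (rule chain_Xsh_fst_const[OF f _ that]) (use assms in \<open>auto simp: supp_Xsh_def\<close>)
  obtain x where x0: "\<And>n. n \<le> - int i \<or> -\<alpha> < n \<Longrightarrow> x n = 0"
    and xd: "\<And>n. - int i \<le> n \<Longrightarrow> n \<le> -1-\<alpha> \<Longrightarrow> snd (f n 0 0) = x n + x (n+1)"
    using telescoping_up[where d="\<lambda>n. snd (f n 0 0)" and L="- int i" and U="-1-\<alpha>"] by auto
  have g: "chain_Xsh i 0 j \<alpha> (cscale ?a (idm i 0 j \<alpha>))"
    by (intro chain_Xsh_cscale chain_Xsh_idm) (use assms in auto)
  have "htpy_Xsh i 0 j \<alpha> f (cscale ?a (idm i 0 j \<alpha>)) x"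
  proof (rule htpy_XshI[OF f g])
    fix n
    show "\<not> (supp_Xsh j \<alpha> (n-1) \<and> supp_Xsh i 0 n) \<Longrightarrow> x n = 0"
      using x0[of n] assms by (auto simp: supp_Xsh_def)
    show "dsub (f n 0 0) (cscale ?a (idm i 0 j \<alpha>) n 0 0) =
      (0, (if supp_Xsh j \<alpha> (n-1) \<and> supp_Xsh j \<alpha> n then x n else 0) +
          (if supp_Xsh i 0 n \<and> supp_Xsh i 0 (n+1) then x (n+1) else 0))"
    proof (cases "- int i \<le> n \<and> n \<le> -1-\<alpha>")
      case True
      then show ?thesis
        using const[of n] xd[of n] x0[of n] assms
        by (cases "f n 0 0") (auto simp: dsub_def cscale_def dscale_def idm_def supp_Xsh_def)
    next
      case False
      then show ?thesis
        using chain_Xsh_vanish[OF f, of 0 0 n] x0[of n] x0[of "n+1"] assms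
        by (auto simp: dsub_def cscale_def dscale_def idm_def supp_Xsh_def)
    qed
  qed
  then show ?thesis unfolding homotopic_Xsh_iff by blast
qed

lemma htp_idm_multiple_zero:
  assumes "1 \<le> i" "i < j" and f: "chain_Xsh i 0 j 0 f"
  shows "htp i 0 j 0 f (cscale (fst (f (-1) 0 0)) (idm i 0 j 0))"
proof -
  let ?a = "fst (f (-1) 0 0)"
  have const: "fst (f n 0 0) = ?a" if "- int i \<le> n" "n \<le> -1" for n
    by (rule chain_Xsh_fst_const[OF f _ that]) (use assms in \<open>auto simp: supp_Xsh_def\<close>)
  obtain x where x0: "\<And>n. n < - int i \<or> -1 < n \<Longrightarrow> x n = 0"
    and xd: "\<And>n. - int i \<le> n \<Longrightarrow> n \<le> -1 \<Longrightarrow> snd (f n 0 0) = x n + x (n+1)"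
    using telescoping_down[where d="\<lambda>n. snd (f n 0 0)" and L="- int i" and U="-1"] by auto
  have g: "chain_Xsh i 0 j 0 (cscale ?a (idm i 0 j 0))"
    by (intro chain_Xsh_cscale chain_Xsh_idm) (use assms in auto)
  have "htpy_Xsh i 0 j 0 f (cscale ?a (idm i 0 j 0)) x"
  proof (rule htpy_XshI[OF f g])
    fix n
    show "\<not> (supp_Xsh j 0 (n-1) \<and> supp_Xsh i 0 n) \<Longrightarrow> x n = 0"
      using x0[of n] assms by (auto simp: supp_Xsh_def)
    show "dsub (f n 0 0) (cscale ?a (idm i 0 j 0) n 0 0) =
      (0, (if supp_Xsh j 0 (n-1) \<and> supp_Xsh j 0 n then x n else 0) +
          (if supp_Xsh i 0 n \<and> supp_Xsh i 0 (n+1) then x (n+1) else 0))"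
    proof (cases "- int i \<le> n \<and> n \<le> -1")
      case True
      then show ?thesis
        using const[of n] xd[of n] x0[of "n+1"] assms
        by (cases "f n 0 0") (auto simp: dsub_def cscale_def dscale_def idm_def supp_Xsh_def)
    next
      case False
      then show ?thesis
        using chain_Xsh_vanish[OF f, of 0 0 n] x0[of n] x0[of "n+1"] assms
        by (auto simp: dsub_def cscale_def dscale_def idm_def supp_Xsh_def)
    qed
  qed
  then show ?thesis unfolding homotopic_Xsh_iff by blast
qed

text \<open>The constant term is constant along the overlap, and the chain condition kills it at its
  upper end (\<alpha> < 0) or its lower end (\<alpha> = 0, j < i).\<close>
lemma chain_Xsh_fst_vanish:
  assumes "- int j < \<alpha>" "\<alpha> \<le> 0" "\<alpha> \<le> int i - int j" "\<not> (\<alpha> = 0 \<and> i = j)"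
    and f: "chain_Xsh i 0 j \<alpha> f"
    and n: "- int j - \<alpha> \<le> n" "n \<le> -1"
  shows "fst (f n 0 0) = 0"
proof -
  have const: "fst (f m 0 0) = fst (f (-1) 0 0)" if "- int j - \<alpha> \<le> m" "m \<le> -1" for m
    by (rule chain_Xsh_fst_const[OF f _ that]) (use assms in \<open>auto simp: supp_Xsh_def\<close>)
  have "fst (f (-1) 0 0) = 0"
  proof (cases "\<alpha> < 0")
    case True
    then show ?thesis
      using chain_Xsh_commute[OF f, of "-1"] assms by (simp add: supp_Xsh_def)
  next
    case False
    then have "i > j" using assms by auto
    with False have "fst (f (- int j - \<alpha>) 0 0) = 0"
      using chain_Xsh_commute[OF f, of "- int j - \<alpha> - 1"] assms by (simp add: supp_Xsh_def)
    then show ?thesis using const[of "- int j - \<alpha>"] assms by simp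
  qed
  then show ?thesis using const[OF n] by simp
qed

lemma htp_epsm_multiple:
  assumes "- int j < \<alpha>" "\<alpha> \<le> 0" "\<alpha> \<le> int i - int j" "\<not> (\<alpha> = 0 \<and> i = j)"
    and f: "chain_Xsh i 0 j \<alpha> f"
  shows "\<exists>s. htp i 0 j \<alpha> f (cscale s epsm)"
proof -
  define L where "L = - int j - \<alpha>"
  have L: "- int i \<le> L" "L \<le> -1" using assms by (auto simp: L_def)
  have fst0: "fst (f n 0 0) = 0" if "L \<le> n" "n \<le> -1" for n
    using chain_Xsh_fst_vanish[OF assms(1-4) f] that by (simp add: L_def)
  obtain x where x0: "\<And>n. n \<le> L \<or> -1 < n \<Longrightarrow> x n = 0"
    and xd: "\<And>n. L \<le> n \<Longrightarrow> n \<le> -2 \<Longrightarrow> snd (f n 0 0) = x n + x (n+1)"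
    using telescoping_up[where d="\<lambda>n. snd (f n 0 0)" and L=L and U="-2"] by auto
  define s where "s = snd (f (-1) 0 0) - x (-1)"
  have g: "chain_Xsh i 0 j \<alpha> (cscale s epsm)"
    by (intro chain_Xsh_cscale chain_Xsh_epsm) (use assms L in \<open>auto simp: supp_Xsh_def L_def\<close>)
  have "htpy_Xsh i 0 j \<alpha> f (cscale s epsm) x"
  proof (rule htpy_XshI[OF f g])
    fix n
    show "\<not> (supp_Xsh j \<alpha> (n-1) \<and> supp_Xsh i 0 n) \<Longrightarrow> x n = 0"
      using x0[of n] assms L by (auto simp: supp_Xsh_def L_def)
    show "dsub (f n 0 0) (cscale s epsm n 0 0) =
      (0, (if supp_Xsh j \<alpha> (n-1) \<and> supp_Xsh j \<alpha> n then x n else 0) +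
          (if supp_Xsh i 0 n \<and> supp_Xsh i 0 (n+1) then x (n+1) else 0))"
    proof -
      consider "n = -1" | "L \<le> n \<and> n \<le> -2" | "n < L \<or> -1 < n" by linarith
      then show ?thesis
      proof cases
        case 1
        then show ?thesis
          using fst0[of n] x0[of 0] x0[of "-1"] assms L
          by (cases "f n 0 0") (auto simp: dsub_def cscale_def dscale_def epsm_def supp_Xsh_def
              s_def L_def)
      next
        case 2
        then show ?thesis
          using fst0[of n] xd[of n] x0[of n] assms L
          by (cases "f n 0 0") (auto simp: dsub_def cscale_def dscale_def epsm_def supp_Xsh_def
              L_def)
      next
        case 3
        then show ?thesis
          using chain_Xsh_vanish[OF f, of 0 0 n] x0[of n] x0[of "n+1"] assms L
          by (auto simp: dsub_def cscale_def dscale_def epsm_def supp_Xsh_def L_def)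
      qed
    qed
  qed
  then show ?thesis unfolding homotopic_Xsh_iff by blast
qed

lemma htp_cscale_idm_eq:
  assumes "supp_Xsh i a n" "supp_Xsh j b n"
    and "htp i a j b (cscale c (idm i a j b)) (cscale c' (idm i a j b))"
  shows "c = c'"
  using htp_fst[OF assms(3), of n 0 0] assms(1,2) by (simp add: cscale_def dscale_def idm_def)

lemma htp_cscale_epsm_eq:
  assumes "- int j < \<alpha>" "\<alpha> \<le> 0" "\<alpha> \<le> int i - int j"
    and "htp i 0 j \<alpha> (cscale c epsm) (cscale c' epsm)"
  shows "c = c'"
proof -
  from assms(4) obtain x where x: "htpy_Xsh i 0 j \<alpha> (cscale c epsm) (cscale c' epsm) x"
    unfolding homotopic_Xsh_iff ..
  define L where "L = - int j - \<alpha>"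
  have L: "- int i \<le> L" "L \<le> -1" using assms by (auto simp: L_def)
  have x_vanish: "n \<le> -1 \<longrightarrow> x n = 0" if "L \<le> n" for n
    using that
  proof (induction n rule: int_ge_induct)
    case base
    show ?case using htpy_Xsh_vanish[OF x, of L] by (simp add: supp_Xsh_def L_def)
  next
    case (step m)
    show ?case
    proof
      assume "m + 1 \<le> -1"
      then have "x m = 0"
        and "snd (dsub (cscale c epsm m 0 0) (cscale c' epsm m 0 0)) = x m + x (m+1)"
        using step htpy_Xsh_diff[OF x, of m] L assms
        by (auto simp: supp_Xsh_def L_def)
      then show "x (m + 1) = 0"
        using \<open>m + 1 \<le> -1\<close> by (simp add: dsub_def cscale_def dscale_def epsm_def)
    qed
  qed
  have "x (-1) = 0" using x_vanish[of "-1"] L by simp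
  moreover have "c - c' = (if L \<le> -2 then x (-1) else 0)"
    using htpy_Xsh_diff[OF x, of "-1"] L assms
    by (auto simp: dsub_def cscale_def dscale_def epsm_def supp_Xsh_def L_def)
  ultimately show ?thesis by (cases "L \<le> -2") simp_all
qed

section \<open>The coefficients of F\<close>

definition eps_range :: "nat \<Rightarrow> nat \<Rightarrow> int \<Rightarrow> bool" where
  "eps_range i j \<alpha> \<longleftrightarrow> - int j < \<alpha> \<and> \<alpha> \<le> min 0 (int i - int j)"

definition one_range :: "nat \<Rightarrow> nat \<Rightarrow> int \<Rightarrow> bool" where
  "one_range i j \<alpha> \<longleftrightarrow> max 0 (int i - int j) \<le> \<alpha> \<and> \<alpha> < int i \<and> \<not> (\<alpha> = 0 \<and> i = j)"

lemma gen_eps_range: "eps_range i j \<alpha> \<Longrightarrow> gen i j \<alpha> = epsm"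
  by (simp add: eps_range_def gen_def eps_map_eq_epsm)

lemma gen_one_range: "one_range i j \<alpha> \<Longrightarrow> gen i j \<alpha> = idm i 0 j \<alpha>"
  by (auto simp: one_range_def gen_def one_map_eq_idm)

lemma chain_Xsh_epsm_range: "i \<ge> 1 \<Longrightarrow> eps_range i j \<alpha> \<Longrightarrow> chain_Xsh i 0 j \<alpha> epsm"
  by (rule chain_Xsh_epsm) (auto simp: supp_Xsh_def eps_range_def)

lemma chain_Xsh_idm_range: "one_range i j \<alpha> \<Longrightarrow> chain_Xsh i 0 j \<alpha> (idm i 0 j \<alpha>)"
  by (rule chain_Xsh_idm) (auto simp: one_range_def)

locale Xsh_functor =
  fixes Fo :: "'k::field cplx \<Rightarrow> 'k cplx"
    and Fm :: "'k cplx \<Rightarrow> 'k cplx \<Rightarrow> 'k cmap \<Rightarrow> 'k cmap"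
  assumes k_linear: "k_linear_functor Fo Fm"
    and full_faithful: "fully_faithful Fo Fm"
    and shift_commutes: "commutes_shift Fo Fm"
    and Fo_fixes_Xsh: "\<forall>i \<ge> 1. \<forall>\<alpha>. Fo (Xsh i \<alpha>) = Xsh i \<alpha>"
begin

abbreviation FX :: "nat \<Rightarrow> int \<Rightarrow> nat \<Rightarrow> int \<Rightarrow> 'k cmap \<Rightarrow> 'k cmap" where
  "FX i a j b f \<equiv> Fm (Xsh i a) (Xsh j b) f"

lemma Fo_Xsh: "i \<ge> 1 \<Longrightarrow> Fo (Xsh i a) = Xsh i a"
  using Fo_fixes_Xsh by blast

lemma perf_functor: "perf_functor Fo Fm"
  using k_linear by (simp add: k_linear_functor_def)

lemma F_chain:
  assumes "i \<ge> 1" "j \<ge> 1" "chain_Xsh i a j b f"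
  shows "chain_Xsh i a j b (FX i a j b f)"
proof -
  have "is_chain (Fo (Xsh i a)) (Fo (Xsh j b)) (FX i a j b f)"
    using perf_functor assms(3) unfolding perf_functor_def is_chain_Xsh_iff[symmetric]
    by (simp add: is_perf_Xsh)
  then show ?thesis using assms by (simp add: Fo_Xsh is_chain_Xsh_iff)
qed

lemma F_htp:
  assumes "i \<ge> 1" "j \<ge> 1" "chain_Xsh i a j b f" "chain_Xsh i a j b g" "htp i a j b f g"
  shows "htp i a j b (FX i a j b f) (FX i a j b g)"
proof -
  have "homotopic (Fo (Xsh i a)) (Fo (Xsh j b)) (FX i a j b f) (FX i a j b g)"
    using perf_functor assms(3-5) unfolding perf_functor_def is_chain_Xsh_iff[symmetric]
    by (simp add: is_perf_Xsh)
  then show ?thesis using assms by (simp add: Fo_Xsh)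
qed

lemma F_ccomp:
  assumes "i \<ge> 1" "j \<ge> 1" "l \<ge> 1" "chain_Xsh i a j b f" "chain_Xsh j b l e g"
  shows "htp i a l e (FX i a l e (ccomp (Xsh j b) g f))
           (ccomp (Xsh j b) (FX j b l e g) (FX i a j b f))"
proof -
  have "homotopic (Fo (Xsh i a)) (Fo (Xsh l e)) (FX i a l e (ccomp (Xsh j b) g f))
          (ccomp (Fo (Xsh j b)) (FX j b l e g) (FX i a j b f))"
    using perf_functor assms(4,5) unfolding perf_functor_def is_chain_Xsh_iff[symmetric]
    by (simp add: is_perf_Xsh)
  then show ?thesis using assms by (simp add: Fo_Xsh)
qed

lemma F_linear:
  assumes "i \<ge> 1" "j \<ge> 1" "chain_Xsh i a j b f" "chain_Xsh i a j b g"
  shows "htp i a j b (FX i a j b (cadd (cscale c f) g))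
           (cadd (cscale c (FX i a j b f)) (FX i a j b g))"
proof -
  have "homotopic (Fo (Xsh i a)) (Fo (Xsh j b)) (FX i a j b (cadd (cscale c f) g))
          (cadd (cscale c (FX i a j b f)) (FX i a j b g))"
    using k_linear assms(3,4) unfolding k_linear_functor_def is_chain_Xsh_iff[symmetric]
    by (simp add: is_perf_Xsh)
  then show ?thesis using assms by (simp add: Fo_Xsh)
qed

lemma F_czero: "i \<ge> 1 \<Longrightarrow> j \<ge> 1 \<Longrightarrow> htp i a j b (FX i a j b czero) czero"
  using F_linear[OF _ _ chain_Xsh_czero chain_Xsh_czero, where c="-1"]
  by (simp add: cadd_cscale_neg)

lemma F_cscale:
  assumes "i \<ge> 1" "j \<ge> 1" "chain_Xsh i a j b f"
  shows "htp i a j b (FX i a j b (cscale c f)) (cscale c (FX i a j b f))"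
proof -
  have "htp i a j b (FX i a j b (cscale c f)) (cadd (cscale c (FX i a j b f)) (FX i a j b czero))"
    using F_linear[OF assms chain_Xsh_czero, of c] by (simp add: cadd_czero)
  moreover have "htp i a j b (cadd (cscale c (FX i a j b f)) (FX i a j b czero))
                  (cadd (cscale c (FX i a j b f)) czero)"
    by (rule htp_cadd_left[OF F_czero[OF assms(1,2)]])
  ultimately show ?thesis by (simp add: cadd_czero htp_trans)
qed

lemma F_shiftm:
  assumes "i \<ge> 1" "j \<ge> 1" "chain_Xsh i a j b f"
  shows "htp i (a+1) j (b+1) (FX i (a+1) j (b+1) (shiftm f)) (shiftm (FX i a j b f))"
proof -
  have "\<forall>X Y f. is_perf X \<and> is_perf Y \<and> is_chain X Y f \<longrightarrow>
          homotopic (Fo (shift X)) (Fo (shift Y))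
            (Fm (shift X) (shift Y) (shiftm f)) (shiftm (Fm X Y f))"
    using shift_commutes unfolding commutes_shift_def by blast
  then have "homotopic (Fo (shift (Xsh i a))) (Fo (shift (Xsh j b)))
          (Fm (shift (Xsh i a)) (shift (Xsh j b)) (shiftm f)) (shiftm (FX i a j b f))"
    using assms(3) by (simp add: is_perf_Xsh is_chain_Xsh_iff)
  then show ?thesis using assms unfolding shift_Xsh by (simp add: Fo_Xsh)
qed

lemma F_faithful:
  assumes "i \<ge> 1" "j \<ge> 1" "chain_Xsh i a j b f" "chain_Xsh i a j b g"
    "htp i a j b (FX i a j b f) (FX i a j b g)"
  shows "htp i a j b f g"
proof -
  have "homotopic (Fo (Xsh i a)) (Fo (Xsh j b)) (FX i a j b f) (FX i a j b g)"
    using assms by (simp add: Fo_Xsh)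
  then show ?thesis
    using full_faithful assms(3,4) unfolding fully_faithful_def is_chain_Xsh_iff[symmetric]
    by (simp add: is_perf_Xsh)
qed

abbreviation K :: "nat \<Rightarrow> nat \<Rightarrow> int \<Rightarrow> 'k" where
  "K \<equiv> kcoef Fm"

lemma kcoef_eqI:
  assumes unique: "\<And>c c' :: 'k. htp i 0 j \<alpha> (cscale c (gen i j \<alpha>)) (cscale c' (gen i j \<alpha>)) \<Longrightarrow> c = c'"
    and F: "htp i 0 j \<alpha> (FX i 0 j \<alpha> (gen i j \<alpha>)) (cscale c (gen i j \<alpha>))"
  shows "K i j \<alpha> = c"
  unfolding kcoef_def
proof (rule the_equality)
  fix c' assume "htp i 0 j \<alpha> (FX i 0 j \<alpha> (gen i j \<alpha>)) (cscale c' (gen i j \<alpha>))"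
  from htp_trans[OF htp_sym[OF this] F] show "c' = c" by (rule unique)
qed (fact F)

lemma kcoef_idm_eqI:
  "one_range i j \<alpha> \<Longrightarrow> htp i 0 j \<alpha> (FX i 0 j \<alpha> (idm i 0 j \<alpha>)) (cscale c (idm i 0 j \<alpha>)) \<Longrightarrow>
   K i j \<alpha> = c"
  by (rule kcoef_eqI, rule htp_cscale_idm_eq[where n="-1-\<alpha>"])
    (auto simp: one_range_def gen_one_range supp_Xsh_def)

lemma kcoef_eps_eqI:
  "eps_range i j \<alpha> \<Longrightarrow> htp i 0 j \<alpha> (FX i 0 j \<alpha> epsm) (cscale c epsm) \<Longrightarrow> K i j \<alpha> = c"
  by (rule kcoef_eqI, rule htp_cscale_epsm_eq) (auto simp: eps_range_def gen_eps_range)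

lemma F_idm:
  assumes "j \<ge> 1" "one_range i j \<alpha>"
  shows "htp i 0 j \<alpha> (FX i 0 j \<alpha> (idm i 0 j \<alpha>)) (cscale (K i j \<alpha>) (idm i 0 j \<alpha>))"
proof -
  have i: "i \<ge> 1" using assms by (auto simp: one_range_def)
  have F: "chain_Xsh i 0 j \<alpha> (FX i 0 j \<alpha> (idm i 0 j \<alpha>))"
    by (rule F_chain[OF i assms(1) chain_Xsh_idm_range[OF assms(2)]])
  obtain s where "htp i 0 j \<alpha> (FX i 0 j \<alpha> (idm i 0 j \<alpha>)) (cscale s (idm i 0 j \<alpha>))"
  proof (cases "\<alpha> = 0")
    case True
    with assms have "i < j" by (auto simp: one_range_def)
    with True show thesis
      using that htp_idm_multiple_zero[OF i _ F[unfolded True]] by simp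
  next
    case False
    with assms have "1 \<le> \<alpha>" "int i - int j \<le> \<alpha>" "\<alpha> < int i" by (auto simp: one_range_def)
    then show thesis using that htp_idm_multiple_pos[OF _ _ _ F] by blast
  qed
  with kcoef_idm_eqI[OF assms(2) this] show ?thesis by simp
qed

lemma F_epsm:
  assumes "i \<ge> 1" "j \<ge> 1" "eps_range i j \<alpha>" "\<not> (\<alpha> = 0 \<and> i = j)"
  shows "htp i 0 j \<alpha> (FX i 0 j \<alpha> epsm) (cscale (K i j \<alpha>) epsm)"
proof -
  have "chain_Xsh i 0 j \<alpha> (FX i 0 j \<alpha> epsm)"
    by (rule F_chain[OF assms(1,2) chain_Xsh_epsm_range[OF assms(1,3)]])
  then obtain s where "htp i 0 j \<alpha> (FX i 0 j \<alpha> epsm) (cscale s epsm)"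
    using htp_epsm_multiple[OF _ _ _ assms(4)] assms(3) by (auto simp: eps_range_def)
  with kcoef_eps_eqI[OF assms(3) this] show ?thesis by simp
qed

lemma F_ccomp_multiple:
  assumes ijl: "i \<ge> 1" "j \<ge> 1" "l \<ge> 1"
    and f: "chain_Xsh i a j b f" and g: "chain_Xsh j b l e g" and u: "chain_Xsh i a l e u"
    and comp: "htp i a l e (ccomp (Xsh j b) g f) (cscale \<sigma> u)" and "\<sigma> \<noteq> 0"
    and Ff: "htp i a j b (FX i a j b f) (cscale p f)"
    and Fg: "htp j b l e (FX j b l e g) (cscale q g)"
  shows "htp i a l e (FX i a l e u) (cscale (p * q) u)"
proof -
  have "htp i a l e (cscale \<sigma> (FX i a l e u)) (FX i a l e (cscale \<sigma> u))"
    by (rule htp_sym[OF F_cscale[OF ijl(1,3) u]])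
  also have "htp i a l e \<dots> (FX i a l e (ccomp (Xsh j b) g f))"
    by (rule htp_sym[OF F_htp[OF ijl(1,3) chain_Xsh_ccomp[OF f g] chain_Xsh_cscale[OF u] comp]])
  also have "htp i a l e \<dots> (ccomp (Xsh j b) (FX j b l e g) (FX i a j b f))"
    by (rule F_ccomp[OF ijl f g])
  also have "htp i a l e \<dots> (ccomp (Xsh j b) (FX j b l e g) (cscale p f))"
    by (rule htp_ccomp_right[OF F_chain[OF ijl(1,2) f] chain_Xsh_cscale[OF f]
          F_chain[OF ijl(2,3) g] Ff])
  also have "htp i a l e \<dots> (ccomp (Xsh j b) (cscale q g) (cscale p f))"
    by (rule htp_ccomp_left[OF chain_Xsh_cscale[OF f] F_chain[OF ijl(2,3) g]
          chain_Xsh_cscale[OF g] Fg])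
  also have "\<dots> = cscale (p * q) (ccomp (Xsh j b) g f)"
    by (rule ccomp_cscale[OF f g])
  also have "htp i a l e \<dots> (cscale (p * q) (cscale \<sigma> u))"
    by (rule htp_cscale[OF comp])
  finally have "htp i a l e (cscale (inverse \<sigma>) (cscale \<sigma> (FX i a l e u)))
                  (cscale (inverse \<sigma>) (cscale (p * q) (cscale \<sigma> u)))"
    by (rule htp_cscale)
  moreover have "inverse \<sigma> * (p * q * \<sigma>) = p * q" "inverse \<sigma> * \<sigma> = 1"
    using \<open>\<sigma> \<noteq> 0\<close> by simp_all
  ultimately show ?thesis by (simp only: cscale_cscale cscale_one)
qed

lemma kcoef_zero_succ:
  assumes "1 \<le> i" "i < j"
  shows "K i (j+1) 0 = K i j 0 * K j (j+1) 0"
proof -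
  have r: "one_range i j 0" "one_range j (j+1) 0" "one_range i (j+1) 0"
    using assms by (auto simp: one_range_def)
  have ccomp_eq: "ccomp (Xsh j 0) (idm j 0 (j+1) 0) (idm i 0 j 0) = idm i 0 (j+1) 0"
    by (rule ccomp_idm_idm) (use assms in \<open>auto simp: supp_Xsh_def\<close>)
  have "htp i 0 (j+1) 0 (ccomp (Xsh j 0) (idm j 0 (j+1) 0) (idm i 0 j 0))
               (cscale 1 (idm i 0 (j+1) 0))"
    unfolding ccomp_eq cscale_one by (rule htp_refl)
  from F_ccomp_multiple[OF _ _ _ _ _ _ this _ F_idm F_idm] show ?thesis
    using assms r by (intro kcoef_idm_eqI) (auto intro: chain_Xsh_idm_range)
qed

lemma kcoef_succ_one_factor:
  assumes "1 \<le> i"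
  shows "K (i+1) (i+1) 1 = K (i+1) (i+2) 0 * K (i+2) (i+1) 1"
proof -
  have r: "one_range (i+1) (i+2) 0" "one_range (i+2) (i+1) 1" "one_range (i+1) (i+1) 1"
    using assms by (auto simp: one_range_def)
  have ccomp_eq:
    "ccomp (Xsh (i+2) 0) (idm (i+2) 0 (i+1) 1) (idm (i+1) 0 (i+2) 0) = idm (i+1) 0 (i+1) 1"
    by (rule ccomp_idm_idm) (auto simp: supp_Xsh_def)
  have "htp (i+1) 0 (i+1) 1 (ccomp (Xsh (i+2) 0) (idm (i+2) 0 (i+1) 1) (idm (i+1) 0 (i+2) 0))
               (cscale 1 (idm (i+1) 0 (i+1) 1))"
    unfolding ccomp_eq cscale_one by (rule htp_refl)
  from F_ccomp_multiple[OF _ _ _ _ _ _ this _ F_idm F_idm] show ?thesis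
    using assms r by (intro kcoef_idm_eqI) (auto intro: chain_Xsh_idm_range)
qed

lemma kcoef_idm_shift:
  assumes "1 \<le> i" "1 \<le> j" "one_range i j \<beta>" "0 \<le> \<beta>"
  shows "K (i+1) j (\<beta>+1) = K (i+1) i 1 * K i j \<beta>"
proof -
  have r: "one_range (i+1) i 1" "one_range (i+1) j (\<beta>+1)"
    using assms by (auto simp: one_range_def)
  have g: "chain_Xsh i 1 j (\<beta>+1) (idm i 1 j (\<beta>+1))"
    using chain_Xsh_shiftm[OF chain_Xsh_idm_range[OF assms(3)]] by (simp add: shiftm_idm)
  have ccomp_eq: "ccomp (Xsh i 1) (idm i 1 j (\<beta>+1)) (idm (i+1) 0 i 1) = idm (i+1) 0 j (\<beta>+1)"
    by (rule ccomp_idm_idm) (use assms in \<open>auto simp: supp_Xsh_def one_range_def\<close>)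
  have comp: "htp (i+1) 0 j (\<beta>+1) (ccomp (Xsh i 1) (idm i 1 j (\<beta>+1)) (idm (i+1) 0 i 1))
                     (cscale 1 (idm (i+1) 0 j (\<beta>+1)))"
    unfolding ccomp_eq cscale_one by (rule htp_refl)
  have "htp i 1 j (\<beta>+1) (FX i 1 j (\<beta>+1) (idm i 1 j (\<beta>+1))) (cscale (K i j \<beta>) (idm i 1 j (\<beta>+1)))"
    using htp_trans[OF F_shiftm[OF assms(1,2) chain_Xsh_idm_range[OF assms(3)]]
        htp_shiftm[OF F_idm[OF assms(2,3)]]]
    by (simp add: shiftm_idm shiftm_cscale)
  from F_ccomp_multiple[OF _ _ _ _ g _ comp _ F_idm this] show ?thesis
    using assms r by (intro kcoef_idm_eqI) (auto intro: chain_Xsh_idm_range)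
qed

lemma kcoef_eps_zero:
  assumes "1 \<le> l" "l \<le> i"
  shows "K i l 0 = K i (i+1) 0 * K (i+1) l 0"
proof -
  have r: "eps_range (i+1) l 0" "eps_range i l 0" "one_range i (i+1) 0"
    using assms by (auto simp: eps_range_def one_range_def)
  have ccomp_eq: "ccomp (Xsh (i+1) 0) epsm (idm i 0 (i+1) 0) = epsm"
    by (rule ccomp_epsm_idm) (use assms in \<open>auto simp: supp_Xsh_def\<close>)
  have "htp i 0 l 0 (ccomp (Xsh (i+1) 0) epsm (idm i 0 (i+1) 0)) (cscale 1 epsm)"
    unfolding ccomp_eq cscale_one by (rule htp_refl)
  from F_ccomp_multiple[OF _ _ _ chain_Xsh_idm_range[OF r(3)] chain_Xsh_epsm_range[OF _ r(1)]
      chain_Xsh_epsm_range[OF _ r(2)] this _ F_idm F_epsm]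
  show ?thesis using assms r by (intro kcoef_eps_eqI) auto
qed

lemma kcoef_eps_shift:
  assumes "1 \<le> j" "1 \<le> l" "eps_range j l \<beta>" "\<beta> < 0"
  shows "K (j+1) l (\<beta>+1) = K (j+1) j 1 * K j l \<beta>"
proof -
  have r: "eps_range (j+1) l (\<beta>+1)" "one_range (j+1) j 1"
    using assms by (auto simp: eps_range_def one_range_def)
  have eps: "chain_Xsh j 0 l \<beta> epsm" by (rule chain_Xsh_epsm_range[OF assms(1,3)])
  have g: "chain_Xsh j 1 l (\<beta>+1) (shiftm epsm)" using chain_Xsh_shiftm[OF eps] by simp
  have comp: "htp (j+1) 0 l (\<beta>+1) (ccomp (Xsh j 1) (shiftm epsm) (idm (j+1) 0 j 1))
                (cscale (-1) epsm)"
    by (rule htp_ccomp_shiftm_epsm) (use assms in \<open>auto simp: eps_range_def\<close>)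
  have "htp j 1 l (\<beta>+1) (FX j 1 l (\<beta>+1) (shiftm epsm)) (cscale (K j l \<beta>) (shiftm epsm))"
    using htp_trans[OF F_shiftm[OF assms(1,2) eps] htp_shiftm[OF F_epsm[OF assms(1-3)]]] assms(4)
    by (simp add: shiftm_cscale)
  from F_ccomp_multiple[OF _ _ _ chain_Xsh_idm_range[OF r(2)] g chain_Xsh_epsm_range[OF _ r(1)]
      comp _ F_idm this]
  show ?thesis using assms r by (intro kcoef_eps_eqI) auto
qed

lemma kcoef_2_1_1_nonzero: "K 2 1 1 \<noteq> 0"
proof
  assume "K 2 1 1 = 0"
  have r: "one_range 2 1 1" by (simp add: one_range_def)
  have "htp 2 0 1 1 (FX 2 0 1 1 (idm 2 0 1 1)) (cscale (K 2 1 1) (idm 2 0 1 1))"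
    by (rule F_idm[OF _ r]) simp
  then have "htp 2 0 1 1 (FX 2 0 1 1 (idm 2 0 1 1)) czero"
    using \<open>K 2 1 1 = 0\<close> by (simp add: cscale_zero)
  also have "htp 2 0 1 1 czero (FX 2 0 1 1 czero)"
    by (rule htp_sym[OF F_czero]) simp_all
  finally have "htp 2 0 1 1 (FX 2 0 1 1 (idm 2 0 1 1)) (FX 2 0 1 1 czero)" .
  from F_faithful[OF _ _ chain_Xsh_idm_range[OF r] chain_Xsh_czero this]
  have "htp 2 0 1 1 (idm 2 0 1 1 :: 'k cmap) czero" by simp
  from htp_fst[OF this, of "-2" 0 0] show False by (simp add: idm_def czero_def supp_Xsh_def)
qed

end

locale normalized_Xsh_functor = Xsh_functor Fo Fm for Fo :: "'k::field cplx \<Rightarrow> 'k cplx" and Fm +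
  assumes kcoef_diag: "\<forall>i \<ge> 1. kcoef Fm i i 0 = 1"
    and kcoef_pred_diag: "\<forall>i \<ge> 2. kcoef Fm (i - 1) i 0 = 1"
begin

lemma kcoef_succ_zero: "1 \<le> i \<Longrightarrow> K i (i+1) 0 = 1"
  using kcoef_pred_diag[rule_format, of "i+1"] by simp

lemma kcoef_zero_below: "1 \<le> i \<Longrightarrow> i < j \<Longrightarrow> K i j 0 = 1"
proof (induction j)
  case (Suc j)
  then show ?case
    using kcoef_zero_succ[of i j] kcoef_succ_zero[of j] kcoef_succ_zero[of i]
    by (cases "i = j") auto
qed simp

lemma kcoef_zero_above:
  assumes "1 \<le> l" "l \<le> i"
  shows "K i l 0 = 1"
  using assms(2)
proof (induction i rule: dec_induct)
  case base
  show ?case using kcoef_diag assms(1) by simp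
next
  case (step i)
  then show ?case using kcoef_eps_zero[of l i] kcoef_succ_zero[of i] assms(1) by simp
qed

lemma kcoef_succ_one:
  assumes "1 \<le> i"
  shows "K (i+1) i 1 = K 2 1 1"
  using assms
proof (induction i rule: dec_induct)
  case base
  show ?case by (simp add: numeral_2_eq_2)
next
  case (step i)
  have "K (i+1) (i+1) 1 = K (i+1) i 1"
    using kcoef_idm_shift[of i "i+1" 0] kcoef_succ_zero[of i] step by (simp add: one_range_def)
  moreover have "K (i+1) (i+1) 1 = K (i+2) (i+1) 1"
    using kcoef_succ_one_factor[of i] kcoef_succ_zero[of "i+1"] step by simp
  ultimately show ?case using step by (simp add: add.commute)
qed

lemma kcoef_nonneg_powi:
  assumes "1 \<le> j" "max 0 (int i - int j) \<le> \<alpha>" "\<alpha> < int i"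
  shows "K i j \<alpha> = K 2 1 1 powi \<alpha>"
proof -
  have "0 \<le> \<alpha>" using assms by simp
  then show ?thesis
    using assms(2,3)
  proof (induction \<alpha> arbitrary: i rule: int_ge_induct)
    case base
    then show ?case using kcoef_diag kcoef_zero_below[of i j] assms(1) by (cases "i = j") auto
  next
    case (step \<alpha>)
    then obtain i' where i: "i = i' + 1" "1 \<le> i'"
      by (cases i) auto
    have IH: "K i' j \<alpha> = K 2 1 1 powi \<alpha>" using step i by (intro step.IH) auto
    have "K i j (\<alpha>+1) = K 2 1 1 * K i' j \<alpha>"
    proof (cases "\<alpha> = 0 \<and> i' = j")
      case True
      then show ?thesis using kcoef_succ_one[OF i(2)] kcoef_diag i by simp
    next
      case False
      then show ?thesis
        using kcoef_idm_shift[OF i(2) assms(1), of \<alpha>] kcoef_succ_one[OF i(2)] step i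
        by (simp add: one_range_def)
    qed
    then show ?case using IH step by (simp add: power_int_add_1')
  qed
qed

lemma kcoef_nonpos_powi:
  assumes "1 \<le> j" "1 \<le> l" "- int l < \<beta>" "\<beta> \<le> 0" "\<beta> \<le> int j - int l"
  shows "K j l \<beta> = K 2 1 1 powi \<beta>"
  using assms(4,3,5,1)
proof (induction \<beta> arbitrary: j rule: int_le_induct)
  case base
  then show ?case using kcoef_zero_above assms(2) by simp
next
  case (step \<beta>)
  have "K (j+1) l \<beta> = K (j+1) j 1 * K j l (\<beta> - 1)"
    using kcoef_eps_shift[of j l "\<beta> - 1"] step assms(2) by (simp add: eps_range_def)
  moreover have "K (j+1) l \<beta> = K 2 1 1 powi \<beta>"
    using step by (intro step.IH) auto
  moreover have "K 2 1 1 powi \<beta> = K 2 1 1 * K 2 1 1 powi (\<beta> - 1)"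
    using power_int_add_1'[of "K 2 1 1" "\<beta> - 1"] kcoef_2_1_1_nonzero by simp
  ultimately show ?case
    using kcoef_succ_one[of j] kcoef_2_1_1_nonzero step by simp
qed

end

theorem theorem5p10:
  fixes Fo :: "'k::field cplx \<Rightarrow> 'k cplx"
    and Fm :: "'k cplx \<Rightarrow> 'k cplx \<Rightarrow> 'k cmap \<Rightarrow> 'k cmap"
  assumes lin: "k_linear_functor Fo Fm"
    and ff: "fully_faithful Fo Fm"
    and sh: "commutes_shift Fo Fm"
    and obj: "\<forall>i \<ge> 1. \<forall>\<alpha>. Fo (Xsh i \<alpha>) = Xsh i \<alpha>"
    and C1: "\<forall>i \<ge> 1. kcoef Fm i i 0 = 1"
    and C2: "\<forall>i \<ge> 2. kcoef Fm (i - 1) i 0 = 1"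
  shows "\<forall>i j \<alpha>. i \<ge> 1 \<and> j \<ge> 1 \<and>
            ((- int j < \<alpha> \<and> \<alpha> \<le> min 0 (int i - int j)) \<or>
             (max 0 (int i - int j) \<le> \<alpha> \<and> \<alpha> < int i)) \<longrightarrow>
            kcoef Fm i j \<alpha> = (kcoef Fm 2 1 1) powi \<alpha>"
proof -
  interpret normalized_Xsh_functor Fo Fm
    by unfold_locales (fact lin ff sh obj C1 C2)+
  show ?thesis
  proof (intro allI impI)
    fix i j \<alpha>
    assume "i \<ge> 1 \<and> j \<ge> 1 \<and> ((- int j < \<alpha> \<and> \<alpha> \<le> min 0 (int i - int j)) \<or>
             (max 0 (int i - int j) \<le> \<alpha> \<and> \<alpha> < int i))"
    then show "kcoef Fm i j \<alpha> = kcoef Fm 2 1 1 powi \<alpha>"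
      using kcoef_nonpos_powi[of i j \<alpha>] kcoef_nonneg_powi[of j i \<alpha>] by force
  qed
qed

end
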